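(* Let $v_1,\dots,v_n$ be non-zero vectors in $\mathbb{C}^n$ and let $\mathcal{A}\subseteq M_n(\mathbb{C})$ be the algebra generated by $$A_1=\sum_{j=1}^n v_1(j)E_{1,j},\ \dots,\ A_n=\sum_{j=1}^n v_n(j)E_{n,j}.$$ Then there exist $k\in\{1,\dots,n\}$, a non-zero vector $v\in\mathbb{C}^k$ and a unitary $U\in M_n(\mathbb{C})$ such that $$\sum_{j=1}^k v(j)E_{1,j},\ \dots,\ \sum_{j=1}^k v(j)E_{k,j}\in U\mathcal{A}U^*.$$
   Context: $E_{i,j}$ denote the matrix units of $M_n(\mathbb{C})$; $v(j)$ denotes the $j$-th coordinate of a vector $v$. *)

theory Defs
  imports "Jordan_Normal_Form.Schur_Decomposition"
begin

(* Matrix unit E_{i,j} of M_n(C) (0-based indices i,j < n). *)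
definition mat_unit :: "nat \<Rightarrow> nat \<Rightarrow> nat \<Rightarrow> complex mat" where
  "mat_unit n i j = mat n n (\<lambda>(a,b). if a = i \<and> b = j then 1 else 0)"

definition row_embed :: "nat \<Rightarrow> nat \<Rightarrow> complex vec \<Rightarrow> complex mat" where
  "row_embed n i v = foldr (\<lambda>j M. (v $ j) \<cdot>\<^sub>m mat_unit n i j + M) [0..<dim_vec v] (0\<^sub>m n n)"

(* The (not necessarily unital) subalgebra of M_n(C) generated by a set S of n x n matrices *)
inductive_set gen_alg :: "nat \<Rightarrow> complex mat set \<Rightarrow> complex mat set" for n S where
  gen: "A \<in> S \<Longrightarrow> A \<in> carrier_mat n n \<Longrightarrow> A \<in> gen_alg n S"
| zero: "0\<^sub>m n n \<in> gen_alg n S"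
| add: "A \<in> gen_alg n S \<Longrightarrow> B \<in> gen_alg n S \<Longrightarrow> A + B \<in> gen_alg n S"
| smult: "A \<in> gen_alg n S \<Longrightarrow> c \<cdot>\<^sub>m A \<in> gen_alg n S"
| mult: "A \<in> gen_alg n S \<Longrightarrow> B \<in> gen_alg n S \<Longrightarrow> A * B \<in> gen_alg n S"

definition unitary_mat :: "nat \<Rightarrow> complex mat \<Rightarrow> bool" where
  "unitary_mat n U \<longleftrightarrow> U \<in> carrier_mat n n \<and> U * mat_adjoint U = 1\<^sub>m n \<and> mat_adjoint U * U = 1\<^sub>m n"

end

theory Submission imports Defs begin

(* Write R_i(w) = sum_j w(j) E_{i,j} for the matrix whose only non-zero row is
   row i, equal to w.  These matrices multiply by R_i(x) R_j(y) = x(j) R_i(y).  Consider the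
   support graph on {0..<n} with an edge a -> b iff v_a(b) \<noteq> 0.  If i -> ... -> j is a path,
   then multiplying R_i(v_i), R_{i'}(v_{i'}), ..., R_j(v_j) and rescaling shows that R_i(v_j)
   lies in the generated algebra A.
   Pick j whose set I of successors is minimal; then every i \<in> I reaches j back, so
   R_i(v_j) \<in> A for all i \<in> I, while v_j is supported on I.  A permutation matrix moving I to
   the first k = |I| coordinates is unitary and conjugates R_i(v_j), i \<in> I, into the
   matrices sum_{t<k} v(t) E_{s,t} for the compressed non-zero vector v \<in> C^k. *)

lemma row_embed_partial_sum:
  assumes "m \<le> n"
  shows "foldr (\<lambda>j M. (v $ j) \<cdot>\<^sub>m mat_unit n i j + M) [l..<m] (0\<^sub>m n n)
     = mat n n (\<lambda>(a,b). if a = i \<and> l \<le> b \<and> b < m then v $ b else 0)"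
  using assms
proof (induction "m - l" arbitrary: l)
  case 0
  then show ?case by (intro eq_matI) auto
next
  case (Suc d)
  then have l: "l < m" by auto
  have IH: "foldr (\<lambda>j M. (v $ j) \<cdot>\<^sub>m mat_unit n i j + M) [Suc l..<m] (0\<^sub>m n n)
     = mat n n (\<lambda>(a,b). if a = i \<and> Suc l \<le> b \<and> b < m then v $ b else 0)"
    using Suc by auto
  show ?case using l IH Suc(3)
    by (subst upt_conv_Cons[OF l]) (auto intro!: eq_matI simp: mat_unit_def)
qed

lemma row_embed_eq:
  assumes "dim_vec v \<le> n"
  shows "row_embed n i v = mat n n (\<lambda>(a,b). if a = i \<and> b < dim_vec v then v $ b else 0)"
  unfolding row_embed_def using row_embed_partial_sum[OF assms, of v i 0] by simp

lemma row_embed_full: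
  assumes "w \<in> carrier_vec n"
  shows "row_embed n i w = mat n n (\<lambda>(a,b). if a = i then w $ b else 0)"
  using assms by (auto simp: row_embed_eq intro!: eq_matI)

lemma row_embed_carrier: "w \<in> carrier_vec n \<Longrightarrow> row_embed n i w \<in> carrier_mat n n"
  by (simp add: row_embed_full)

lemma row_embed_mult:
  assumes x: "x \<in> carrier_vec n" and y: "y \<in> carrier_vec n" and j: "j < n"
  shows "row_embed n i x * row_embed n j y = (x $ j) \<cdot>\<^sub>m row_embed n i y"
proof (rule eq_matI)
  fix a b assume "a < dim_row ((x $ j) \<cdot>\<^sub>m row_embed n i y)"
    "b < dim_col ((x $ j) \<cdot>\<^sub>m row_embed n i y)"
  then have "a < n" "b < n" using y by (auto simp: row_embed_full)
  then show "(row_embed n i x * row_embed n j y) $$ (a, b) = ((x $ j) \<cdot>\<^sub>m row_embed n i y) $$ (a, b)"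
    using x y j
    by (auto simp: row_embed_full scalar_prod_def row_def col_def if_distrib sum.delta cong: if_cong)
qed (use x y in \<open>auto simp: row_embed_full\<close>)

definition supp_graph :: "nat \<Rightarrow> (nat \<Rightarrow> complex vec) \<Rightarrow> (nat \<times> nat) set" where
  "supp_graph n vs = {(a,b). a < n \<and> b < n \<and> vs a $ b \<noteq> 0}"

(* Path lemma: if i reaches j in the support graph, then R_i(v_j) lies in the algebra.
   Induction on the path from i: for an edge i -> i' we have
   R_i(v_j) = v_i(i')^{-1} R_i(v_i) R_{i'}(v_j). *)
lemma row_embed_in_gen_alg_path:
  assumes vs: "\<And>i. i < n \<Longrightarrow> vs i \<in> carrier_vec n"
    and path: "(i,j) \<in> (supp_graph n vs)\<^sup>*" and j: "j < n"
  shows "row_embed n i (vs j) \<in> gen_alg n {row_embed n i (vs i) | i. i < n}"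
  using path
proof (induction rule: converse_rtrancl_induct)
  case base
  show ?case by (rule gen_alg.gen) (use j vs row_embed_carrier in auto)
next
  case (step i i')
  then have i: "i < n" "i' < n" and c: "vs i $ i' \<noteq> 0" by (auto simp: supp_graph_def)
  have "row_embed n i (vs i) \<in> gen_alg n {row_embed n i (vs i) | i. i < n}"
    by (rule gen_alg.gen) (use i vs row_embed_carrier in auto)
  with step.IH have "(1 / vs i $ i') \<cdot>\<^sub>m (row_embed n i (vs i) * row_embed n i' (vs j))
      \<in> gen_alg n {row_embed n i (vs i) | i. i < n}"
    by (intro gen_alg.smult gen_alg.mult)
  also have "(1 / vs i $ i') \<cdot>\<^sub>m (row_embed n i (vs i) * row_embed n i' (vs j)) = row_embed n i (vs j)"
    using c by (simp add: row_embed_mult vs i j) (auto intro!: eq_matI simp: row_embed_full vs j)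
  finally show ?case .
qed

(* Every finite non-empty digraph has a vertex j that can be reached back from everything it
   reaches: choose j with the fewest successors; a successor i of j has successors
   E^* `` {i} \<subseteq> E^* `` {j}, hence equal by minimality, so j is a successor of i. *)
lemma exists_closed_vertex:
  fixes E :: "'a rel"
  assumes fin: "finite S" and ne: "S \<noteq> {}" and E: "E \<subseteq> S \<times> S"
  shows "\<exists>j\<in>S. \<forall>i. (j,i) \<in> E\<^sup>* \<longrightarrow> (i,j) \<in> E\<^sup>*"
proof -
  define succs where "succs x = E\<^sup>* `` {x}" for x
  have succs_sub: "succs x \<subseteq> S" if "x \<in> S" for x
  proof
    fix y assume "y \<in> succs x"
    then have "(x,y) \<in> E\<^sup>*" by (simp add: succs_def)
    then show "y \<in> S" by (induction rule: rtrancl_induct) (use that E in auto)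
  qed
  obtain j where j: "j \<in> S" and min: "\<And>x. x \<in> S \<Longrightarrow> card (succs j) \<le> card (succs x)"
    using ex_has_least_nat[of "\<lambda>x. x \<in> S" _ "\<lambda>x. card (succs x)"] ne by blast
  have "(i,j) \<in> E\<^sup>*" if ji: "(j,i) \<in> E\<^sup>*" for i
  proof -
    have i: "i \<in> S" using succs_sub[OF j] ji by (auto simp: succs_def)
    have "succs i \<subseteq> succs j" using ji by (auto simp: succs_def intro: rtrancl_trans)
    then have "succs i = succs j"
      using min[OF i] finite_subset[OF succs_sub[OF j] fin] by (metis card_seteq)
    moreover have "j \<in> succs j" by (simp add: succs_def)
    ultimately show ?thesis by (metis Image_singleton_iff succs_def)
  qed
  with j show ?thesis by blast
qed

lemma mat_adjoint_eq:
  assumes "U \<in> carrier_mat n m"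
  shows "mat_adjoint U = mat m n (\<lambda>(a,b). conjugate (U $$ (b,a)))"
  using assms unfolding mat_adjoint_def
  by (intro eq_matI) (auto simp: mat_of_rows_def cols_def)

definition perm_mat :: "nat \<Rightarrow> (nat \<Rightarrow> nat) \<Rightarrow> complex mat" where
  "perm_mat n \<tau> = mat n n (\<lambda>(a,b). if b = \<tau> a then 1 else 0)"

lemma perm_mat_mult:
  assumes \<tau>: "\<And>a. a < n \<Longrightarrow> \<tau> a < n" and M: "M \<in> carrier_mat n m"
  shows "perm_mat n \<tau> * M = mat n m (\<lambda>(a,b). M $$ (\<tau> a, b))"
  using M \<tau>
  by (auto intro!: eq_matI simp: perm_mat_def scalar_prod_def row_def col_def
      if_distrib if_distribR sum.delta cong: if_cong)

lemma mult_perm_mat_adjoint: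
  assumes \<tau>: "\<And>a. a < n \<Longrightarrow> \<tau> a < n" and M: "M \<in> carrier_mat m n"
  shows "M * mat_adjoint (perm_mat n \<tau>) = mat m n (\<lambda>(a,b). M $$ (a, \<tau> b))"
proof -
  have "mat_adjoint (perm_mat n \<tau>) = mat n n (\<lambda>(a,b). if a = \<tau> b then 1 else 0)"
    by (auto intro!: eq_matI simp: mat_adjoint_eq[of _ n n] perm_mat_def)
  then show ?thesis
    using M \<tau>
    by (auto intro!: eq_matI simp: scalar_prod_def row_def col_def
        if_distrib sum.delta cong: if_cong)
qed

lemma perm_mat_conjugate:
  assumes \<tau>: "\<And>a. a < n \<Longrightarrow> \<tau> a < n" and M: "M \<in> carrier_mat n n"
  shows "perm_mat n \<tau> * M * mat_adjoint (perm_mat n \<tau>) = mat n n (\<lambda>(a,b). M $$ (\<tau> a, \<tau> b))"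
proof -
  let ?PM = "mat n n (\<lambda>(a,b). M $$ (\<tau> a, b))"
  have "perm_mat n \<tau> * M * mat_adjoint (perm_mat n \<tau>) = ?PM * mat_adjoint (perm_mat n \<tau>)"
    by (simp add: perm_mat_mult[OF \<tau> M])
  also have "\<dots> = mat n n (\<lambda>(a,b). ?PM $$ (a, \<tau> b))"
    by (rule mult_perm_mat_adjoint) (use \<tau> in auto)
  also have "\<dots> = mat n n (\<lambda>(a,b). M $$ (\<tau> a, \<tau> b))"
    using \<tau> by (auto intro!: eq_matI)
  finally show ?thesis .
qed

(* Permutation matrices are unitary: P P^* = (\<delta>_{\<tau> a, \<tau> b}) = 1 by injectivity of \<tau>,
   and a one-sided inverse of a square matrix is two-sided. *)
lemma perm_mat_unitary:
  assumes \<tau>: "bij_betw \<tau> {0..<n} {0..<n}"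
  shows "unitary_mat n (perm_mat n \<tau>)"
proof -
  have into: "\<tau> a < n" if "a < n" for a using bij_betw_apply[OF \<tau>] that by auto
  have P: "perm_mat n \<tau> \<in> carrier_mat n n" by (simp add: perm_mat_def)
  have "perm_mat n \<tau> * mat_adjoint (perm_mat n \<tau>) = perm_mat n \<tau> * 1\<^sub>m n * mat_adjoint (perm_mat n \<tau>)"
    using P by simp
  also have "\<dots> = 1\<^sub>m n"
    using into inj_on_eq_iff[OF bij_betw_imp_inj_on[OF \<tau>]]
    by (subst perm_mat_conjugate) (auto intro!: eq_matI)
  finally have "perm_mat n \<tau> * mat_adjoint (perm_mat n \<tau>) = 1\<^sub>m n" .
  moreover have "mat_adjoint (perm_mat n \<tau>) \<in> carrier_mat n n"
    using P by (simp add: mat_adjoint_eq[OF P])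
  ultimately show ?thesis
    using P mat_mult_left_right_inverse unfolding unitary_mat_def by blast
qed

(* A permutation of {0..<n} mapping the first card I positions onto a given I \<subseteq> {0..<n}:
   glue a bijection {0..<card I} -> I with one {card I..<n} -> {0..<n} - I. *)
lemma exists_perm_to_front:
  assumes I: "I \<subseteq> {0..<n}"
  shows "\<exists>\<tau>. bij_betw \<tau> {0..<n} {0..<n} \<and> \<tau> ` {0..<card I} = I"
proof -
  define k where "k = card I"
  have fin: "finite I" using I finite_subset by blast
  have kn: "k \<le> n" using card_mono[OF _ I] by (simp add: k_def)
  obtain f where f: "bij_betw f {0..<k} I"
    using finite_same_card_bij[of "{0..<k}" I] fin by (auto simp: k_def)
  obtain g where g: "bij_betw g {k..<n} ({0..<n} - I)"
    using finite_same_card_bij[of "{k..<n}" "{0..<n} - I"] I fin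
    by (auto simp: k_def card_Diff_subset)
  define \<tau> where "\<tau> x = (if x \<in> {0..<k} then f x else g x)" for x
  have "bij_betw \<tau> ({0..<k} \<union> {k..<n}) (I \<union> ({0..<n} - I))"
    unfolding \<tau>_def by (rule bij_betw_disjoint_Un[OF f g]) auto
  moreover have "{0..<k} \<union> {k..<n} = {0..<n}" "I \<union> ({0..<n} - I) = {0..<n}"
    using kn I by auto
  moreover have "\<tau> ` {0..<k} = I"
    using f unfolding bij_betw_def \<tau>_def by auto
  ultimately show ?thesis unfolding k_def by auto
qed

lemma perm_conjugate_row_embed:
  assumes \<tau>: "bij_betw \<tau> {0..<n} {0..<n}" and front: "\<tau> ` {0..<k} = I" and k: "k \<le> n"
    and w: "w \<in> carrier_vec n" and supp: "\<And>b. b < n \<Longrightarrow> b \<notin> I \<Longrightarrow> w $ b = 0"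
    and s: "s < k"
  shows "perm_mat n \<tau> * row_embed n (\<tau> s) w * mat_adjoint (perm_mat n \<tau>)
         = row_embed n s (vec k (\<lambda>t. w $ \<tau> t))"
proof -
  have into: "\<tau> a < n" if "a < n" for a using bij_betw_apply[OF \<tau>] that by auto
  have inj: "\<tau> a = \<tau> b \<longleftrightarrow> a = b" if "a < n" "b < n" for a b
    using inj_on_eq_iff[OF bij_betw_imp_inj_on[OF \<tau>]] that by auto
  have tail: "w $ \<tau> b = 0" if "k \<le> b" "b < n" for b
  proof -
    have "\<tau> b \<notin> I"
      using that k inj front by (auto simp: image_iff)
    then show ?thesis using supp into that by auto
  qed
  show ?thesis
    using s k into inj tail
    by (subst perm_mat_conjugate)
       (auto intro!: eq_matI simp: row_embed_carrier[OF w] row_embed_full[OF w] row_embed_eq)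
qed

lemma compressed_vec_nonzero:
  assumes front: "\<tau> ` {0..<k} = I"
    and w: "w \<in> carrier_vec n" "w \<noteq> 0\<^sub>v n" and supp: "\<And>b. b < n \<Longrightarrow> b \<notin> I \<Longrightarrow> w $ b = 0"
  shows "vec k (\<lambda>t. w $ \<tau> t) \<noteq> 0\<^sub>v k"
proof -
  obtain b where b: "b < n" "w $ b \<noteq> 0"
    using w by (metis carrier_vecD eq_vecI index_zero_vec(1,2))
  then obtain t where "t < k" "\<tau> t = b"
    using supp front by fastforce
  with b show ?thesis by (metis index_vec index_zero_vec(1))
qed

(* Take j closed in the support graph and I its
   successors: every i \<in> I reaches j back, so the path lemma applies. *)
lemma exists_support_block:
  assumes n: "n \<ge> 1" and vs: "\<And>i. i < n \<Longrightarrow> vs i \<in> carrier_vec n"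
  obtains j I where "j < n" "j \<in> I" "I \<subseteq> {0..<n}"
    and "\<And>b. b < n \<Longrightarrow> b \<notin> I \<Longrightarrow> vs j $ b = 0"
    and "\<And>i. i \<in> I \<Longrightarrow> row_embed n i (vs j) \<in> gen_alg n {row_embed n i (vs i) | i. i < n}"
proof -
  define E where "E = supp_graph n vs"
  have "E \<subseteq> {0..<n} \<times> {0..<n}" by (auto simp: E_def supp_graph_def)
  then obtain j where j: "j < n" and closed: "\<And>i. (j,i) \<in> E\<^sup>* \<Longrightarrow> (i,j) \<in> E\<^sup>*"
    using exists_closed_vertex[of "{0..<n}" E] n by auto
  define I where "I = E\<^sup>* `` {j}"
  show ?thesis
  proof
    show "j < n" "j \<in> I" using j by (simp_all add: I_def)
    show "I \<subseteq> {0..<n}" using j by (auto simp: I_def E_def supp_graph_def elim: rtranclE)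
    show "vs j $ b = 0" if "b < n" "b \<notin> I" for b
      using that j by (auto simp: I_def E_def supp_graph_def)
    show "row_embed n i (vs j) \<in> gen_alg n {row_embed n i (vs i) | i. i < n}" if "i \<in> I" for i
    proof -
      have "(j, i) \<in> E\<^sup>*" using that by (simp add: I_def)
      then have "(i, j) \<in> (supp_graph n vs)\<^sup>*" unfolding E_def[symmetric] by (rule closed)
      then show ?thesis using row_embed_in_gen_alg_path[of n vs i j] vs j by blast
    qed
  qed
qed

theorem lemma4:
  fixes n :: nat and vs :: "nat \<Rightarrow> complex vec"
  assumes "n \<ge> 1"
    and "\<And>i. i < n \<Longrightarrow> vs i \<in> carrier_vec n \<and> vs i \<noteq> 0\<^sub>v n"
  shows "\<exists>k v U. 1 \<le> k \<and> k \<le> n \<and> v \<in> carrier_vec k \<and> v \<noteq> 0\<^sub>v k \<and> unitary_mat n U \<and>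
           (\<forall>i<k. row_embed n i v \<in>
              {U * A * mat_adjoint U | A. A \<in> gen_alg n {row_embed n i (vs i) | i. i < n}})"
proof -
  have vs: "vs i \<in> carrier_vec n" if "i < n" for i using assms(2) that by blast
  obtain j I where j: "j < n" "j \<in> I" and I: "I \<subseteq> {0..<n}"
    and supp: "\<And>b. b < n \<Longrightarrow> b \<notin> I \<Longrightarrow> vs j $ b = 0"
    and in_alg: "\<And>i. i \<in> I \<Longrightarrow> row_embed n i (vs j) \<in> gen_alg n {row_embed n i (vs i) | i. i < n}"
    using exists_support_block[of n vs, OF assms(1) vs] by blast
  obtain \<tau> where \<tau>: "bij_betw \<tau> {0..<n} {0..<n}" and front: "\<tau> ` {0..<card I} = I"
    using exists_perm_to_front[OF I] by blast
  define v where "v = vec (card I) (\<lambda>t. vs j $ \<tau> t)"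
  have k: "1 \<le> card I" "card I \<le> n"
    using j I finite_subset[OF I] card_mono[OF _ I] by (auto simp: Suc_le_eq card_gt_0_iff)
  show ?thesis
  proof (intro exI conjI allI impI)
    show "v \<noteq> 0\<^sub>v (card I)"
      unfolding v_def by (rule compressed_vec_nonzero[OF front]) (use assms(2) j supp in auto)
    fix s assume s: "s < card I"
    have "row_embed n s v = perm_mat n \<tau> * row_embed n (\<tau> s) (vs j) * mat_adjoint (perm_mat n \<tau>)"
      unfolding v_def using perm_conjugate_row_embed[OF \<tau> front k(2) vs[OF j(1)] supp s] by simp
    moreover have "\<tau> s \<in> I" using front s by auto
    ultimately show "row_embed n s v \<in> {perm_mat n \<tau> * A * mat_adjoint (perm_mat n \<tau>) | A.
        A \<in> gen_alg n {row_embed n i (vs i) | i. i < n}}" using in_alg by blast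
  qed (use k perm_mat_unitary[OF \<tau>] in \<open>simp_all add: v_def\<close>)
qed

end
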